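(* Suppose A1–A3 hold and that $\sum_{k=0}^{\infty}\nu_k<+\infty$. Let $\{x_k\}$ be generated by Algorithm 1 and let $\epsilon\in(0,1)$. If $T$ is a positive integer with $$T\ge 2\max\left\{\sum_{k=0}^{\infty}\nu_k,\ f(x_0)-f_{low}\right\}\kappa_c^{-1}\epsilon^{-2},$$ then $\min_{k=0,\dots,T-1}\|\nabla f(x_k)\|\le\epsilon$.
   Context: Let $(X,\langle\cdot,\cdot\rangle)$ be a real Hilbert space with induced norm $\|\cdot\|$, and $f:X\to\mathbb{R}$ Fréchet differentiable with gradient $\nabla f$. Algorithm 1 (general non-monotone descent algorithm): parameters $x_0\in X$, $\alpha_0>0$, $\beta,\rho\in(0,1)$. For $k=0,1,2,\dots$: choose $d_k\in X$ with $\langle\nabla f(x_k),d_k\rangle<0$; then for $l=0,1,2,\dots$ choose a number $\nu_{k,l}\ge 0$ and test $$f(x_k+\alpha_k\beta^l d_k)\le f(x_k)+\rho\alpha_k\beta^l\langle\nabla f(x_k),d_k\rangle+\nu_{k,l};$$ let $l_k$ be the first $l$ for which this holds, set $\nu_k:=\nu_{k,l_k}$, $x_{k+1}=x_k+\alpha_k\beta^{l_k}d_k$ and $\alpha_{k+1}=\alpha_k\beta^{l_k-1}$. It is assumed the algorithm generates infinite sequences (all $l_k$ finite). Assumptions: A1: $\nabla f$ is Lipschitz continuous with constant $L>0$. A2: there is $f_{low}\in\mathbb{R}$ with $f(x)\ge f_{low}$ for all $x\in X$. A3: there are constants $c_1,c_2>0$ with $\langle\nabla f(x_k),d_k\rangle\le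 -c_1\|\nabla f(x_k)\|^2$ and $\|d_k\|\le c_2\|\nabla f(x_k)\|$ for all $k$. Constant: $\kappa_c=\min\left\{\rho\beta\alpha_0c_1,\ \frac{2\beta\rho(1-\rho)c_1^2}{Lc_2^2}\right\}$. *)

theory Defs
  imports "HOL-Analysis.Analysis"
begin

text \<open>The run is described by
  the iterates x, the directions d, the step parameters alpha, the trial numbers
  nu k l (the number \<open>\<nu>_{k,l}\<close>) and the accepted indices lk k (the number \<open>l_k\<close>).
  The gradient of f is g.  \<open>\<nu>_k = nu k (lk k)\<close>.\<close>

definition armijo_test :: "('a::real_inner \<Rightarrow> real) \<Rightarrow> ('a \<Rightarrow> 'a) \<Rightarrow> real \<Rightarrow> real
    \<Rightarrow> 'a \<Rightarrow> 'a \<Rightarrow> real \<Rightarrow> nat \<Rightarrow> real \<Rightarrow> bool" where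
  "armijo_test f g \<beta> \<rho> xk dk ak l nukl \<longleftrightarrow>
     f (xk + (ak * \<beta> ^ l) *\<^sub>R dk) \<le> f xk + \<rho> * ak * \<beta> ^ l * inner (g xk) dk + nukl"

definition algorithm1 ::
  "('a::real_inner \<Rightarrow> real) \<Rightarrow> ('a \<Rightarrow> 'a) \<Rightarrow> 'a \<Rightarrow> real \<Rightarrow> real \<Rightarrow> real
   \<Rightarrow> (nat \<Rightarrow> 'a) \<Rightarrow> (nat \<Rightarrow> 'a) \<Rightarrow> (nat \<Rightarrow> real) \<Rightarrow> (nat \<Rightarrow> nat \<Rightarrow> real) \<Rightarrow> (nat \<Rightarrow> nat) \<Rightarrow> bool" where
  "algorithm1 f g x0 \<alpha>0 \<beta> \<rho> x d \<alpha> nu lk \<longleftrightarrow>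
     \<alpha>0 > 0 \<and> 0 < \<beta> \<and> \<beta> < 1 \<and> 0 < \<rho> \<and> \<rho> < 1 \<and>
     x 0 = x0 \<and> \<alpha> 0 = \<alpha>0 \<and>
     (\<forall>k. inner (g (x k)) (d k) < 0) \<and>
     (\<forall>k l. nu k l \<ge> 0) \<and>
     (\<forall>k. armijo_test f g \<beta> \<rho> (x k) (d k) (\<alpha> k) (lk k) (nu k (lk k))) \<and>
     (\<forall>k l. l < lk k \<longrightarrow> \<not> armijo_test f g \<beta> \<rho> (x k) (d k) (\<alpha> k) l (nu k l)) \<and>
     (\<forall>k. x (Suc k) = x k + (\<alpha> k * \<beta> ^ lk k) *\<^sub>R d k) \<and>
     (\<forall>k. \<alpha> (Suc k) = \<alpha> k * \<beta> powi (int (lk k) - 1))"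

definition kappa_c :: "real \<Rightarrow> real \<Rightarrow> real \<Rightarrow> real \<Rightarrow> real \<Rightarrow> real \<Rightarrow> real" where
  "kappa_c \<alpha>0 \<beta> \<rho> L c1 c2 =
     min (\<rho> * \<beta> * \<alpha>0 * c1) (2 * \<beta> * \<rho> * (1 - \<rho>) * c1^2 / (L * c2^2))"

end

theory Submission
  imports Defs
begin

text \<open>If the Armijo test fails at a trial step \<open>s\<close>, the descent lemma for the
  \<open>L\<close>-Lipschitz gradient forces \<open>s > 2 (1 - \<rho>) c1 / (L c2^2)\<close>.  Since the next
  iteration starts from the accepted step divided by \<open>\<beta>\<close>, every accepted step is at least
  \<open>\<beta> min \<alpha>0 (2 (1 - \<rho>) c1 / (L c2^2))\<close>, so each iteration lowers \<open>f\<close> by at least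
  \<open>\<kappa>_c \<parallel>\<nabla>f(x_k)\<parallel>^2\<close> up to the slack \<open>\<nu>_k\<close>.  Telescoping bounds
  \<open>\<kappa>_c \<Sum>_{k<T} \<parallel>\<nabla>f(x_k)\<parallel>^2\<close> by \<open>f(x0) - f_low + \<Sum> \<nu>_k\<close>, and the smallest of
  the \<open>T\<close> gradient norms is at most their root mean square.\<close>

lemma lipschitz_gradient_descent_bound:
  fixes f :: "'a::real_inner \<Rightarrow> real" and g :: "'a \<Rightarrow> 'a"
  assumes grad: "\<And>y. (f has_derivative (\<lambda>h. inner (g y) h)) (at y)"
    and lip: "\<And>y z. norm (g y - g z) \<le> L * norm (y - z)"
    and s: "s \<ge> 0"
  shows "f (y + s *\<^sub>R d) \<le> f y + s * inner (g y) d + L / 2 * s^2 * (norm d)^2"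
proof -
  define h where "h t = f (y + t *\<^sub>R d) - t * inner (g y) d - L / 2 * t^2 * (norm d)^2" for t
  have h_deriv: "(h has_real_derivative
      (inner (g (y + t *\<^sub>R d)) d - inner (g y) d - L * t * (norm d)^2)) (at t)" for t
  proof -
    have "((\<lambda>t. y + t *\<^sub>R d) has_derivative (\<lambda>h. h *\<^sub>R d)) (at t)"
      by (auto intro!: derivative_eq_intros)
    from has_derivative_compose[OF this grad]
    have "((\<lambda>t. f (y + t *\<^sub>R d)) has_real_derivative inner (g (y + t *\<^sub>R d)) d) (at t)"
      unfolding has_field_derivative_def by (simp add: mult.commute[of _ "inner _ d"])
    then show ?thesis
      unfolding h_def by (auto intro!: derivative_eq_intros)
  qed
  have "h s \<le> h 0"
  proof (rule DERIV_nonpos_imp_nonincreasing[OF s])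
    fix t :: real assume t: "0 \<le> t"
    have "inner (g (y + t *\<^sub>R d)) d - inner (g y) d = inner (g (y + t *\<^sub>R d) - g y) d"
      by (simp add: inner_diff_left)
    also have "\<dots> \<le> norm (g (y + t *\<^sub>R d) - g y) * norm d"
      by (rule norm_cauchy_schwarz)
    also have "\<dots> \<le> L * norm (t *\<^sub>R d) * norm d"
      using lip[of "y + t *\<^sub>R d" y] by (simp add: mult_right_mono)
    also have "\<dots> = L * t * (norm d)^2"
      using t by (simp add: power2_eq_square)
    finally show "\<exists>D. (h has_real_derivative D) (at t) \<and> D \<le> 0"
      using h_deriv by fastforce
  qed
  then show ?thesis
    unfolding h_def by simp
qed

lemma armijo_failure_imp_step_gt:
  fixes f :: "'a::real_inner \<Rightarrow> real" and g :: "'a \<Rightarrow> 'a"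
  assumes grad: "\<And>y. (f has_derivative (\<lambda>h. inner (g y) h)) (at y)"
    and lip: "\<And>y z. norm (g y - g z) \<le> L * norm (y - z)"
    and L: "L > 0" and c2: "c2 > 0" and \<rho>: "\<rho> < 1" and s: "s > 0"
    and slope: "inner (g y) d \<le> - c1 * (norm (g y))^2"
    and dir_bound: "norm d \<le> c2 * norm (g y)"
    and nonstationary: "g y \<noteq> 0"
    and fails: "f y + \<rho> * s * inner (g y) d < f (y + s *\<^sub>R d)"
  shows "2 * (1 - \<rho>) * c1 / (L * c2^2) < s"
proof -
  define G where "G = norm (g y)"
  define I where "I = inner (g y) d"
  have "f (y + s *\<^sub>R d) \<le> f y + s * I + L / 2 * s^2 * (norm d)^2"
    unfolding I_def using lipschitz_gradient_descent_bound[OF grad lip] s by simp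
  with fails have "s * ((1 - \<rho>) * (- I)) < s * (L / 2 * s * (norm d)^2)"
    unfolding I_def by (simp add: algebra_simps power2_eq_square)
  then have "(1 - \<rho>) * (- I) < L / 2 * s * (norm d)^2"
    using s mult_less_cancel_left_pos by blast
  moreover have "(1 - \<rho>) * (c1 * G^2) \<le> (1 - \<rho>) * (- I)"
    using slope \<rho> unfolding I_def G_def by (intro mult_left_mono) auto
  moreover have "L / 2 * s * (norm d)^2 \<le> L / 2 * s * (c2 * G)^2"
    using dir_bound L s unfolding G_def by (intro mult_left_mono power_mono) auto
  ultimately have "((1 - \<rho>) * c1) * G^2 < (L / 2 * s * c2^2) * G^2"
    by (simp add: power_mult_distrib algebra_simps)
  then have "(1 - \<rho>) * c1 < L / 2 * s * c2^2"
    using nonstationary unfolding G_def by (simp add: mult_less_cancel_right)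
  then show ?thesis
    using L c2 by (simp add: field_simps)
qed

lemma Min_le_of_sum_power2_le:
  fixes a :: "nat \<Rightarrow> real"
  assumes "T > 0" and "\<epsilon> \<ge> 0" and "(\<Sum>k<T. (a k)^2) \<le> real T * \<epsilon>^2"
  shows "(MIN k\<in>{..<T}. a k) \<le> \<epsilon>"
proof (rule ccontr)
  assume "\<not> ?thesis"
  then have "\<forall>k<T. \<epsilon> < a k"
    using \<open>T > 0\<close> by (auto simp: not_le Min_gr_iff lessThan_empty_iff)
  then have "(\<Sum>k<T. \<epsilon>^2) < (\<Sum>k<T. (a k)^2)"
    using assms(1,2) by (intro sum_strict_mono power_strict_mono) auto
  with assms(3) show False
    by simp
qed

locale nonmonotone_descent_run =
  fixes f :: "'a::real_inner \<Rightarrow> real" and g :: "'a \<Rightarrow> 'a"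
    and x d :: "nat \<Rightarrow> 'a" and \<alpha> :: "nat \<Rightarrow> real" and nu :: "nat \<Rightarrow> nat \<Rightarrow> real"
    and lk :: "nat \<Rightarrow> nat" and x0 :: 'a and \<alpha>0 \<beta> \<rho> L c1 c2 :: real
  assumes grad: "\<And>y. (f has_derivative (\<lambda>h. inner (g y) h)) (at y)"
    and alg: "algorithm1 f g x0 \<alpha>0 \<beta> \<rho> x d \<alpha> nu lk"
    and L_pos: "L > 0"
    and lip: "\<And>y z. norm (g y - g z) \<le> L * norm (y - z)"
    and c1_pos: "c1 > 0" and c2_pos: "c2 > 0"
    and slope: "\<And>k. inner (g (x k)) (d k) \<le> - c1 * (norm (g (x k)))^2"
    and dir_bound: "\<And>k. norm (d k) \<le> c2 * norm (g (x k))"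
begin

lemma
  shows \<alpha>0_pos: "\<alpha>0 > 0" and \<beta>_pos: "\<beta> > 0" and \<beta>_less_1: "\<beta> < 1"
    and \<rho>_pos: "\<rho> > 0" and \<rho>_less_1: "\<rho> < 1"
    and x_0: "x 0 = x0" and \<alpha>_0: "\<alpha> 0 = \<alpha>0"
    and descent_dir: "inner (g (x k)) (d k) < 0"
    and nu_nonneg: "nu k l \<ge> 0"
    and accepted: "armijo_test f g \<beta> \<rho> (x k) (d k) (\<alpha> k) (lk k) (nu k (lk k))"
    and rejected: "l < lk k \<Longrightarrow> \<not> armijo_test f g \<beta> \<rho> (x k) (d k) (\<alpha> k) l (nu k l)"
    and x_Suc: "x (Suc k) = x k + (\<alpha> k * \<beta> ^ lk k) *\<^sub>R d k"
    and \<alpha>_Suc_powi: "\<alpha> (Suc k) = \<alpha> k * \<beta> powi (int (lk k) - 1)"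
  using alg unfolding algorithm1_def by auto

definition step :: "nat \<Rightarrow> real" where
  "step k = \<alpha> k * \<beta> ^ lk k"

definition step_bound :: real where
  "step_bound = min (\<beta> * \<alpha>0) (\<beta> * (2 * (1 - \<rho>) * c1 / (L * c2^2)))"

lemma \<alpha>_Suc: "\<alpha> (Suc k) = step k / \<beta>"
proof -
  have "\<beta> powi (int (lk k) - 1) = \<beta> powi (int (lk k)) / \<beta> powi 1"
    using \<beta>_pos by (intro power_int_diff) auto
  then show ?thesis
    using \<alpha>_Suc_powi[of k] unfolding step_def by (simp add: power_int_of_nat)
qed

lemma \<alpha>_pos: "\<alpha> k > 0"
  by (induction k) (simp_all add: \<alpha>_0 \<alpha>0_pos \<alpha>_Suc step_def \<beta>_pos)

lemma step_ge_step_bound_if_backtracked: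
  assumes "lk k \<ge> 1"
  shows "step k \<ge> step_bound"
proof -
  define s where "s = \<alpha> k * \<beta> ^ (lk k - 1)"
  have step_eq: "step k = \<beta> * s"
    using assms unfolding step_def s_def by (cases "lk k") auto
  have "\<not> armijo_test f g \<beta> \<rho> (x k) (d k) (\<alpha> k) (lk k - 1) (nu k (lk k - 1))"
    using assms by (intro rejected) auto
  then have "f (x k) + \<rho> * s * inner (g (x k)) (d k) < f (x k + s *\<^sub>R d k)"
    using nu_nonneg[of k "lk k - 1"] unfolding armijo_test_def s_def by (simp add: mult.assoc)
  moreover have "g (x k) \<noteq> 0"
    using descent_dir[of k] by auto
  ultimately have "2 * (1 - \<rho>) * c1 / (L * c2^2) < s"
    using armijo_failure_imp_step_gt[OF grad lip L_pos c2_pos \<rho>_less_1 _ slope dir_bound]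
      \<alpha>_pos \<beta>_pos unfolding s_def by simp
  then have "\<beta> * (2 * (1 - \<rho>) * c1 / (L * c2^2)) \<le> step k"
    unfolding step_eq using \<beta>_pos by (intro mult_left_mono) auto
  then show ?thesis
    unfolding step_bound_def by (rule min.coboundedI2)
qed

lemma \<alpha>_ge_step_bound: "\<alpha> k \<ge> step_bound"
proof (induction k)
  case 0
  have "\<beta> * \<alpha>0 \<le> \<alpha>0"
    using \<beta>_less_1 \<alpha>0_pos by simp
  then show ?case
    unfolding step_bound_def \<alpha>_0 by simp
next
  case (Suc k)
  have "step k \<ge> step_bound"
    using Suc step_ge_step_bound_if_backtracked[of k] by (cases "lk k") (auto simp: step_def)
  moreover have "step k \<le> step k / \<beta>"
    using \<beta>_pos \<beta>_less_1 \<alpha>_pos[of k] unfolding step_def by (simp add: field_simps)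
  ultimately show ?case
    unfolding \<alpha>_Suc by simp
qed

lemma step_ge_step_bound: "step k \<ge> step_bound"
  using \<alpha>_ge_step_bound[of k] step_ge_step_bound_if_backtracked[of k]
  by (cases "lk k") (auto simp: step_def)

lemma kappa_c_eq: "kappa_c \<alpha>0 \<beta> \<rho> L c1 c2 = \<rho> * c1 * step_bound"
  using \<rho>_pos c1_pos
  by (simp add: kappa_c_def step_bound_def min_mult_distrib_left field_simps power2_eq_square)

lemma step_bound_pos: "step_bound > 0"
  using \<beta>_pos \<rho>_less_1 \<alpha>0_pos c1_pos L_pos c2_pos unfolding step_bound_def by simp

lemma kappa_c_pos: "kappa_c \<alpha>0 \<beta> \<rho> L c1 c2 > 0"
  using \<rho>_pos c1_pos step_bound_pos unfolding kappa_c_eq by simp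

lemma sufficient_decrease:
  "f (x (Suc k)) \<le> f (x k) - kappa_c \<alpha>0 \<beta> \<rho> L c1 c2 * (norm (g (x k)))^2 + nu k (lk k)"
proof -
  have "f (x (Suc k)) \<le> f (x k) + \<rho> * step k * inner (g (x k)) (d k) + nu k (lk k)"
    using accepted[of k] unfolding armijo_test_def x_Suc step_def by (simp add: mult.assoc)
  also have "\<rho> * step k * inner (g (x k)) (d k) \<le> \<rho> * step k * (- c1 * (norm (g (x k)))^2)"
    using slope[of k] \<rho>_pos step_ge_step_bound[of k] step_bound_pos
    by (intro mult_left_mono) auto
  also have "\<dots> \<le> - (\<rho> * c1 * step_bound) * (norm (g (x k)))^2"
    using step_ge_step_bound[of k] \<rho>_pos c1_pos by (simp add: mult_right_mono)
  finally show ?thesis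
    unfolding kappa_c_eq by simp
qed

lemma sum_grad_norm_bound:
  "kappa_c \<alpha>0 \<beta> \<rho> L c1 c2 * (\<Sum>k<n. (norm (g (x k)))^2)
     \<le> f x0 - f (x n) + (\<Sum>k<n. nu k (lk k))"
proof (induction n)
  case 0
  then show ?case by (simp add: x_0)
next
  case (Suc n)
  then show ?case
    using sufficient_decrease[of n] by (simp add: algebra_simps)
qed

end

theorem corollary1:
  fixes f :: "'a::{real_inner, complete_space} \<Rightarrow> real" and g :: "'a \<Rightarrow> 'a"
    and x d :: "nat \<Rightarrow> 'a" and \<alpha> :: "nat \<Rightarrow> real" and nu :: "nat \<Rightarrow> nat \<Rightarrow> real"
    and lk :: "nat \<Rightarrow> nat" and x0 :: 'a
    and \<alpha>0 \<beta> \<rho> L f_low c1 c2 \<epsilon> :: real and T :: nat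
  assumes grad: "\<And>y. (f has_derivative (\<lambda>h. inner (g y) h)) (at y)"
    and alg: "algorithm1 f g x0 \<alpha>0 \<beta> \<rho> x d \<alpha> nu lk"
    and A1: "L > 0" "\<And>y z. norm (g y - g z) \<le> L * norm (y - z)"
    and A2: "\<And>y. f y \<ge> f_low"
    and A3: "c1 > 0" "c2 > 0"
      "\<And>k. inner (g (x k)) (d k) \<le> - c1 * (norm (g (x k)))^2"
      "\<And>k. norm (d k) \<le> c2 * norm (g (x k))"
    and nu_sum: "summable (\<lambda>k. nu k (lk k))"
    and eps: "0 < \<epsilon>" "\<epsilon> < 1"
    and T: "T > 0"
      "real T \<ge> 2 * max (\<Sum>k. nu k (lk k)) (f x0 - f_low)
                  * inverse (kappa_c \<alpha>0 \<beta> \<rho> L c1 c2) * inverse (\<epsilon>^2)"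
  shows "(MIN k\<in>{..<T}. norm (g (x k))) \<le> \<epsilon>"
proof -
  interpret nonmonotone_descent_run f g x d \<alpha> nu lk x0 \<alpha>0 \<beta> \<rho> L c1 c2
    using grad alg A1 A3 by unfold_locales
  define \<kappa> where "\<kappa> = kappa_c \<alpha>0 \<beta> \<rho> L c1 c2"
  define M where "M = max (\<Sum>k. nu k (lk k)) (f x0 - f_low)"
  have "(\<Sum>k<T. nu k (lk k)) \<le> M"
    using nu_sum nu_nonneg unfolding M_def by (intro max.coboundedI1 sum_le_suminf) auto
  moreover have "f x0 - f (x T) \<le> M"
    using A2[of "x T"] unfolding M_def by linarith
  ultimately have "\<kappa> * (\<Sum>k<T. (norm (g (x k)))^2) \<le> 2 * M"
    using sum_grad_norm_bound[of T] unfolding \<kappa>_def by linarith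
  also have "2 * M \<le> \<kappa> * (real T * \<epsilon>^2)"
    using T(2) kappa_c_pos eps(1) unfolding \<kappa>_def M_def by (simp add: field_simps)
  finally have "(\<Sum>k<T. (norm (g (x k)))^2) \<le> real T * \<epsilon>^2"
    using kappa_c_pos unfolding \<kappa>_def by simp
  then show ?thesis
    using Min_le_of_sum_power2_le T(1) eps(1) by simp
qed

end
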